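(* For any nontrivial connected graph $G$, $\gamma_{oiR}(G)<\gamma_{oidR}(G)<2\gamma_{oiR}(G)$.
   Context: A graph is nontrivial if it has at least two vertices. A DRD function of $G$ is $f:V(G)\to\{0,1,2,3\}$ such that every vertex with value $0$ has a neighbor with value $3$ or two neighbors with value $2$, and every vertex with value $1$ has a neighbor with value at least $2$; it is an OIDRD function if the set of vertices with value $0$ is independent, and $\gamma_{oidR}(G)$ is the minimum weight $\sum_v f(v)$ of an OIDRD function. A Roman dominating function is $f:V(G)\to\{0,1,2\}$ such that every vertex with value $0$ has a neighbor with value $2$; it is an OIRD function if the set of vertices with value $0$ is independent, and $\gamma_{oiR}(G)$ is the minimum weight of an OIRD function. *)

theory Defs
  imports Main
begin

definition graph :: "'a set \<Rightarrow> ('a \<Rightarrow> 'a \<Rightarrow> bool) \<Rightarrow> bool" where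
  "graph V E \<longleftrightarrow> finite V \<and> (\<forall>x y. E x y \<longrightarrow> x \<in> V \<and> y \<in> V)
     \<and> (\<forall>x y. E x y \<longrightarrow> E y x) \<and> (\<forall>x. \<not> E x x)"

definition connected_graph :: "'a set \<Rightarrow> ('a \<Rightarrow> 'a \<Rightarrow> bool) \<Rightarrow> bool" where
  "connected_graph V E \<longleftrightarrow> graph V E \<and> V \<noteq> {} \<and> (\<forall>x\<in>V. \<forall>y\<in>V. E\<^sup>*\<^sup>* x y)"

definition nontrivial :: "'a set \<Rightarrow> bool" where
  "nontrivial V \<longleftrightarrow> card V \<ge> 2"

definition indep_set :: "('a \<Rightarrow> 'a \<Rightarrow> bool) \<Rightarrow> 'a set \<Rightarrow> bool" where
  "indep_set E S \<longleftrightarrow> (\<forall>x\<in>S. \<forall>y\<in>S. \<not> E x y)"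

definition weight :: "'a set \<Rightarrow> ('a \<Rightarrow> nat) \<Rightarrow> nat" where
  "weight V f = (\<Sum>v\<in>V. f v)"

definition DRD :: "'a set \<Rightarrow> ('a \<Rightarrow> 'a \<Rightarrow> bool) \<Rightarrow> ('a \<Rightarrow> nat) \<Rightarrow> bool" where
  "DRD V E f \<longleftrightarrow> (\<forall>v\<in>V. f v \<le> 3)
     \<and> (\<forall>v\<in>V. f v = 0 \<longrightarrow> ((\<exists>u. E v u \<and> f u = 3) \<or>
            (\<exists>u w. u \<noteq> w \<and> E v u \<and> E v w \<and> f u = 2 \<and> f w = 2)))
     \<and> (\<forall>v\<in>V. f v = 1 \<longrightarrow> (\<exists>u. E v u \<and> f u \<ge> 2))"

definition OIDRD :: "'a set \<Rightarrow> ('a \<Rightarrow> 'a \<Rightarrow> bool) \<Rightarrow> ('a \<Rightarrow> nat) \<Rightarrow> bool" where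
  "OIDRD V E f \<longleftrightarrow> DRD V E f \<and> indep_set E {v\<in>V. f v = 0}"

definition gamma_oidR :: "'a set \<Rightarrow> ('a \<Rightarrow> 'a \<Rightarrow> bool) \<Rightarrow> nat" where
  "gamma_oidR V E = (LEAST w. \<exists>f. OIDRD V E f \<and> weight V f = w)"

definition RD :: "'a set \<Rightarrow> ('a \<Rightarrow> 'a \<Rightarrow> bool) \<Rightarrow> ('a \<Rightarrow> nat) \<Rightarrow> bool" where
  "RD V E f \<longleftrightarrow> (\<forall>v\<in>V. f v \<le> 2)
     \<and> (\<forall>v\<in>V. f v = 0 \<longrightarrow> (\<exists>u. E v u \<and> f u = 2))"

definition OIRD :: "'a set \<Rightarrow> ('a \<Rightarrow> 'a \<Rightarrow> bool) \<Rightarrow> ('a \<Rightarrow> nat) \<Rightarrow> bool" where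
  "OIRD V E f \<longleftrightarrow> RD V E f \<and> indep_set E {v\<in>V. f v = 0}"

definition gamma_oiR :: "'a set \<Rightarrow> ('a \<Rightarrow> 'a \<Rightarrow> bool) \<Rightarrow> nat" where
  "gamma_oiR V E = (LEAST w. \<exists>f. OIRD V E f \<and> weight V f = w)"

end

theory Submission
  imports Defs
begin

(*
  Lowering values shows gamma_oiR < gamma_oidR: capping an optimal OIDRD function at 2 gives an
  OIRD function, and if no vertex has value 3, then every 0 sees two 2s, so lowering a single 2
  to 1 still gives one; either way the weight drops.

  Conversely, relabelling 2 to 3 and 1 to 2 turns an optimal OIRD function f into an OIDRD
  function of weight below 2 w(f) as soon as f takes the value 2. Otherwise f is constant 1 of
  weight |V|, and labelling the ends of one edge by 0 and 3 and every other vertex by 2 is an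
  OIDRD function of weight 2|V| - 1.
*)

lemma graph_finite: "graph V E \<Longrightarrow> finite V"
  by (simp add: graph_def)

lemma graph_edge_in_vertices: "graph V E \<Longrightarrow> E x y \<Longrightarrow> x \<in> V \<and> y \<in> V"
  by (simp add: graph_def)

lemma graph_irreflexive: "graph V E \<Longrightarrow> \<not> E x x"
  by (simp add: graph_def)

lemma gamma_oiR_attained: "\<exists>f. OIRD V E f \<and> weight V f = gamma_oiR V E"
proof -
  have "OIRD V E (\<lambda>_. 2)" by (auto simp: OIRD_def RD_def indep_set_def)
  then have "\<exists>w f. OIRD V E f \<and> weight V f = w" by blast
  then show ?thesis unfolding gamma_oiR_def by (rule LeastI_ex)
qed

lemma gamma_oiR_le: "OIRD V E f \<Longrightarrow> gamma_oiR V E \<le> weight V f"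
  unfolding gamma_oiR_def by (rule Least_le) blast

lemma gamma_oidR_attained: "\<exists>f. OIDRD V E f \<and> weight V f = gamma_oidR V E"
proof -
  have "OIDRD V E (\<lambda>_. 3)" by (auto simp: OIDRD_def DRD_def indep_set_def)
  then have "\<exists>w f. OIDRD V E f \<and> weight V f = w" by blast
  then show ?thesis unfolding gamma_oidR_def by (rule LeastI_ex)
qed

lemma gamma_oidR_le: "OIDRD V E f \<Longrightarrow> gamma_oidR V E \<le> weight V f"
  unfolding gamma_oidR_def by (rule Least_le) blast

lemma weight_strict_mono:
  assumes "finite V" "\<forall>v\<in>V. f v \<le> g v" "a \<in> V" "f a < g a"
  shows "weight V f < weight V g"
  unfolding weight_def using assms by (intro sum_strict_mono_ex1) auto

lemma DRD_neighbour_ge_two: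
  assumes "DRD V E f" "v \<in> V" "f v \<le> 1"
  shows "\<exists>u. E v u \<and> f u \<ge> 2"
proof (cases "f v = 0")
  case True
  then show ?thesis using assms unfolding DRD_def by force
next
  case False
  then show ?thesis using assms unfolding DRD_def by simp
qed

lemma DRD_ex_value_ge_two:
  assumes "graph V E" "V \<noteq> {}" "DRD V E f"
  shows "\<exists>v\<in>V. f v \<ge> 2"
proof -
  obtain v where "v \<in> V" using assms(2) by blast
  show ?thesis
  proof (cases "f v \<ge> 2")
    case False
    then obtain u where "E v u" "f u \<ge> 2"
      using DRD_neighbour_ge_two[OF assms(3) \<open>v \<in> V\<close>] by auto
    then show ?thesis using graph_edge_in_vertices[OF assms(1)] by blast
  qed (use \<open>v \<in> V\<close> in blast)
qed

lemma OIRD_min_two: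
  assumes "OIDRD V E f"
  shows "OIRD V E (\<lambda>v. min (f v) 2)"
proof -
  have zeros: "{v\<in>V. min (f v) 2 = 0} = {v\<in>V. f v = 0}" by auto
  have "\<exists>u. E v u \<and> min (f u) 2 = 2" if "v \<in> V" "f v = 0" for v
    using DRD_neighbour_ge_two[of V E f v] assms that
    unfolding OIDRD_def by (metis min.absorb2 zero_le)
  then show ?thesis using assms unfolding OIRD_def RD_def OIDRD_def zeros by auto
qed

lemma OIRD_lower_a_two:
  assumes "graph V E" "OIDRD V E f" "\<forall>v\<in>V. f v \<noteq> 3" "a \<in> V" "f a = 2"
  shows "OIRD V E (f(a := 1))"
proof -
  have drd: "DRD V E f" and indep: "indep_set E {v\<in>V. f v = 0}"
    using assms(2) unfolding OIDRD_def by auto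
  have zeros: "{v\<in>V. (f(a := 1)) v = 0} = {v\<in>V. f v = 0}" using assms(5) by auto
  have two_twos: "\<exists>u w. u \<noteq> w \<and> E v u \<and> E v w \<and> f u = 2 \<and> f w = 2"
    if "v \<in> V" "f v = 0" for v
  proof -
    have "\<not> (\<exists>u. E v u \<and> f u = 3)"
      using assms(3) graph_edge_in_vertices[OF assms(1)] by blast
    moreover have "(\<exists>u. E v u \<and> f u = 3)
        \<or> (\<exists>u w. u \<noteq> w \<and> E v u \<and> E v w \<and> f u = 2 \<and> f w = 2)"
      using drd that unfolding DRD_def by blast
    ultimately show ?thesis by blast
  qed
  have "\<exists>u. E v u \<and> (f(a := 1)) u = 2" if "v \<in> V" "(f(a := 1)) v = 0" for v
  proof -
    have "f v = 0" using that assms(5) by (cases "v = a") auto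
    then obtain u w where "u \<noteq> w" "E v u" "E v w" "f u = 2" "f w = 2"
      using two_twos \<open>v \<in> V\<close> by blast
    then show ?thesis by (cases "u = a") auto
  qed
  moreover have "(f(a := 1)) v \<le> 2" if "v \<in> V" for v
  proof -
    have "f v \<le> 3" "f v \<noteq> 3" using drd assms(3) that unfolding DRD_def by auto
    then show ?thesis by simp
  qed
  ultimately show ?thesis using indep unfolding OIRD_def RD_def zeros by blast
qed

lemma OIDRD_imp_lighter_OIRD:
  assumes "graph V E" "V \<noteq> {}" "OIDRD V E f"
  shows "\<exists>g. OIRD V E g \<and> weight V g < weight V f"
proof (cases "\<exists>a\<in>V. f a = 3")
  case True
  then obtain a where "a \<in> V" "f a = 3" by blast
  then have "weight V (\<lambda>v. min (f v) 2) < weight V f"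
    using graph_finite[OF assms(1)] by (intro weight_strict_mono) auto
  then show ?thesis using OIRD_min_two[OF assms(3)] by blast
next
  case False
  have drd: "DRD V E f" using assms(3) by (simp add: OIDRD_def)
  obtain a where a: "a \<in> V" "f a \<ge> 2" using DRD_ex_value_ge_two[OF assms(1,2) drd] by blast
  moreover have "f a \<le> 3" using drd a(1) by (simp add: DRD_def)
  ultimately have "f a = 2" using False by fastforce
  have "weight V (f(a := 1)) < weight V f"
    using graph_finite[OF assms(1)] a(1) \<open>f a = 2\<close> by (intro weight_strict_mono) auto
  then show ?thesis using OIRD_lower_a_two[OF assms(1,3) _ a(1) \<open>f a = 2\<close>] False by blast
qed

theorem gamma_oiR_less_gamma_oidR:
  assumes "graph V E" "V \<noteq> {}"
  shows "gamma_oiR V E < gamma_oidR V E"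
proof -
  obtain f where f: "OIDRD V E f" "weight V f = gamma_oidR V E"
    using gamma_oidR_attained by blast
  obtain g where "OIRD V E g" "weight V g < weight V f"
    using OIDRD_imp_lighter_OIRD[OF assms f(1)] by blast
  then show ?thesis using gamma_oiR_le[of V E g] f(2) by linarith
qed

lemma OIDRD_of_OIRD:
  assumes "OIRD V E f"
  shows "OIDRD V E (\<lambda>v. if f v = 2 then 3 else 2 * f v)"
proof -
  have rd: "RD V E f" and indep: "indep_set E {v\<in>V. f v = 0}"
    using assms by (auto simp: OIRD_def)
  have zeros: "{v\<in>V. (if f v = 2 then 3 else 2 * f v) = 0} = {v\<in>V. f v = 0}" by auto
  have "\<exists>u. E v u \<and> (if f u = 2 then 3 else 2 * f u) = 3" if "v \<in> V" "f v = 0" for v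
    using rd that unfolding RD_def by auto
  moreover have "(if f v = 2 then 3 else 2 * f v) \<le> (3::nat)" if "v \<in> V" for v
    using rd that unfolding RD_def by auto
  ultimately show ?thesis using indep unfolding OIDRD_def DRD_def zeros by auto
qed

lemma OIRD_without_two_is_one:
  assumes "graph V E" "OIRD V E f" "\<forall>v\<in>V. f v \<noteq> 2" "v \<in> V"
  shows "f v = 1"
proof -
  have rd: "RD V E f" using assms(2) by (simp add: OIRD_def)
  have "f v \<noteq> 0"
    using rd assms(3,4) graph_edge_in_vertices[OF assms(1)] unfolding RD_def by blast
  moreover have "f v \<le> 2" using rd assms(4) by (simp add: RD_def)
  ultimately show ?thesis using assms(3,4) by fastforce
qed

lemma connected_nontrivial_has_edge:
  assumes "connected_graph V E" "nontrivial V"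
  obtains x u where "E x u"
proof -
  have "finite V" using assms(1) by (simp add: connected_graph_def graph_def)
  then obtain x y where "x \<in> V" "y \<in> V" "x \<noteq> y"
    using assms(2) card_le_Suc0_iff_eq[of V] by (force simp: nontrivial_def)
  then have "E\<^sup>*\<^sup>* x y" using assms(1) by (simp add: connected_graph_def)
  then show ?thesis using \<open>x \<noteq> y\<close> that by (metis converse_rtranclpE)
qed

lemma gamma_oidR_less_twice_card:
  assumes "graph V E" "E x u"
  shows "gamma_oidR V E < 2 * card V"
proof -
  have xu: "finite V" "x \<in> V" "u \<in> V" "x \<noteq> u"
    using assms graph_finite[OF assms(1)] graph_edge_in_vertices[OF assms]
      graph_irreflexive[OF assms(1)] by auto
  define f where "f = (\<lambda>_. 2::nat)(x := 0, u := 3)"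
  have zeros: "{v\<in>V. f v = 0} = {x}" using xu by (auto simp: f_def)
  have "\<exists>w. E x w \<and> f w = 3" using assms(2) xu(4) by (auto simp: f_def)
  then have "OIDRD V E f"
    unfolding OIDRD_def DRD_def zeros indep_set_def
    using xu graph_irreflexive[OF assms(1)] by (auto simp: f_def)
  moreover have "weight V f + 1 = 2 * card V"
  proof -
    have "weight V f = f x + f u + sum f (V - {x} - {u})"
      unfolding weight_def using xu by (simp add: sum.remove)
    also have "\<dots> = 3 + 2 * card (V - {x} - {u})" using xu by (simp add: f_def)
    also have "card (V - {x} - {u}) = card V - 2" using xu by simp
    finally show ?thesis using xu card_mono[of V "{x, u}"] by simp
  qed
  ultimately show ?thesis using gamma_oidR_le[of V E f] by linarith
qed

theorem gamma_oidR_less_twice_gamma_oiR: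
  assumes "connected_graph V E" "nontrivial V"
  shows "gamma_oidR V E < 2 * gamma_oiR V E"
proof -
  have graph: "graph V E" using assms(1) by (simp add: connected_graph_def)
  obtain f where f: "OIRD V E f" "weight V f = gamma_oiR V E"
    using gamma_oiR_attained by blast
  show ?thesis
  proof (cases "\<exists>a\<in>V. f a = 2")
    case True
    then obtain a where "a \<in> V" "f a = 2" by blast
    then have "weight V (\<lambda>v. if f v = 2 then 3 else 2 * f v) < weight V (\<lambda>v. 2 * f v)"
      using graph_finite[OF graph] by (intro weight_strict_mono) auto
    also have "\<dots> = 2 * weight V f" by (simp add: weight_def sum_distrib_left)
    finally show ?thesis using gamma_oidR_le[OF OIDRD_of_OIRD[OF f(1)]] f(2) by linarith
  next
    case False
    then have "weight V f = card V"
      using OIRD_without_two_is_one[OF graph f(1)] by (simp add: weight_def)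
    moreover obtain x u where "E x u" using connected_nontrivial_has_edge[OF assms] .
    ultimately show ?thesis using gamma_oidR_less_twice_card[OF graph] f(2) by metis
  qed
qed

theorem corollary2:
  fixes V :: "'a set" and E :: "'a \<Rightarrow> 'a \<Rightarrow> bool"
  assumes "connected_graph V E" and "nontrivial V"
  shows "gamma_oiR V E < gamma_oidR V E \<and> gamma_oidR V E < 2 * gamma_oiR V E"
proof
  have "graph V E" "V \<noteq> {}" using assms(1) by (auto simp: connected_graph_def)
  then show "gamma_oiR V E < gamma_oidR V E" by (rule gamma_oiR_less_gamma_oidR)
  show "gamma_oidR V E < 2 * gamma_oiR V E" using assms by (rule gamma_oidR_less_twice_gamma_oiR)
qed

end
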